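(* Let $G$ be a finite group with $G=P\rtimes F$, where $P$ is a cyclic normal $p$-subgroup for some prime $p$, $F$ is a subgroup with $|F|>1$ and $\gcd(p,|F|)=1$. Then: (1) each element of $F$ acts on $P$ (by conjugation) either trivially or fixed-point-freely (i.e. fixes only the identity of $P$); (2) if $x\in F$ has order $m$ and $u\in P$, then $m$ is the least positive integer such that $(ux)^m\in P$; (3) if $u\in P$ and $x\in C_F(P)$, then $o(ux)=o(u)o(x)$; (4) if $u\in P$ and $x\in F\setminus C_F(P)$, then $o(ux)=o(x)$; (5) with $Z=C_F(P)$, $$\psi(G)=\psi(P)\psi(Z)+|P|\,\psi(F\setminus Z)<\psi(P)\psi(Z)+|P|\,\psi(F),$$ where for a subset $S\subseteq G$ we write $\psi(S)=\sum_{s\in S}o(s)$.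
   Context: For a finite group $G$, $\psi(G)=\sum_{g\in G} o(g)$ denotes the sum of the orders of all elements of $G$; the same notation is used for subsets. $C_F(P)$ is the centralizer of $P$ in $F$. *)

theory Defs
  imports "HOL-Algebra.Algebra"
begin

definition psi :: "('a, 'b) monoid_scheme \<Rightarrow> 'a set \<Rightarrow> nat" where
  "psi G S = (\<Sum>s\<in>S. group.ord G s)"

definition centralizer_in :: "('a, 'b) monoid_scheme \<Rightarrow> 'a set \<Rightarrow> 'a set \<Rightarrow> 'a set" where
  "centralizer_in G F P = {x \<in> F. \<forall>u\<in>P. x \<otimes>\<^bsub>G\<^esub> u = u \<otimes>\<^bsub>G\<^esub> x}"

end

theory Submission
  imports Defs "HOL-Number_Theory.Cong"
begin

text \<open>
  As P is cyclic and normal, every x \<in> F acts on P as a power map u \<mapsto> u^a, and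
  x^m = 1 for m = o(x) gives p^k | a^m - 1, where |P| = p^k. Since m is prime to p, the factorisation
  a^m - 1 = (a - 1)(1 + a + ... + a^(m-1)) leaves two cases: either p^k | a - 1 and x centralises P, or
  p does not divide a - 1, so x fixes no nontrivial element of P and p^k divides the geometric sum,
  whence (ux)^m = u^(1 + a + ... + a^(m-1)) x^m = 1. As (ux)^n \<in> P exactly when o(x) | n, this gives
  o(ux) = o(x) for x outside the centraliser, while for x in it o(u) and o(x) are coprime and multiply.
  Summing over the bijection P \<times> F \<rightarrow> G, (u, x) \<mapsto> ux, yields the formula for \<psi>(G).
\<close>

lemma prime_power_dvd_pow_sub_one_cases:
  fixes p m k :: nat and A :: int
  assumes "Factorial_Ring.prime p" and "coprime p m" and "int p ^ k dvd A ^ m - 1"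
  shows "int p ^ k dvd A - 1 \<or> (\<not> int p dvd A - 1 \<and> int p ^ k dvd (\<Sum>i<m. A ^ i))"
proof -
  let ?S = "\<Sum>i<m. A ^ i"
  have factor: "A ^ m - 1 = (A - 1) * ?S" by (rule power_diff_1_eq)
  show ?thesis
  proof (cases "int p dvd A - 1")
    case True
    then have "[?S = (\<Sum>i<m. 1 ^ i)] (mod int p)"
      by (intro cong_sum cong_pow) (simp add: cong_iff_dvd_diff)
    then have "[?S = int m] (mod int p)" by simp
    moreover have "coprime (int m) (int p)" using assms(2) by (simp add: ac_simps)
    ultimately have "coprime (int p ^ k) ?S"
      by (metis cong_imp_coprime cong_sym coprime_commute coprime_power_left_iff)
    then show ?thesis using assms(3) factor by (metis coprime_dvd_mult_left_iff)
  next
    case False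
    then have "coprime (int p ^ k) (A - 1)"
      using assms(1) prime_imp_coprime[of "int p"] by simp
    then show ?thesis using False assms(3) factor by (metis coprime_dvd_mult_right_iff)
  qed
qed

context group
begin

lemma inv_mult_cancel_left [simp]: "a \<in> carrier G \<Longrightarrow> b \<in> carrier G \<Longrightarrow> inv a \<otimes> (a \<otimes> b) = b"
  by (simp add: m_assoc[symmetric])

lemma conj_nat_pow:
  assumes "x \<in> carrier G" "y \<in> carrier G"
  shows "x \<otimes> y [^] (n::nat) \<otimes> inv x = (x \<otimes> y \<otimes> inv x) [^] n"
proof (induction n)
  case (Suc n)
  have "x \<otimes> y [^] Suc n \<otimes> inv x = (x \<otimes> y [^] n \<otimes> inv x) \<otimes> (x \<otimes> y \<otimes> inv x)"
    using assms by (simp add: m_assoc)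
  then show ?case using Suc by simp
qed (use assms in simp)

lemma subgroup_nat_pow_closed: "subgroup H G \<Longrightarrow> h \<in> H \<Longrightarrow> h [^] (n::nat) \<in> H"
  using subgroup_int_pow_closed[of H h "int n"] by (simp add: int_pow_int)

lemma ord_dvd_card_subgroup:
  assumes "subgroup H G" "h \<in> H"
  shows "ord h dvd card H"
proof -
  interpret H: group "G\<lparr>carrier := H\<rparr>" using assms(1) by (rule subgroup_imp_group)
  have "h [^]\<^bsub>G\<lparr>carrier := H\<rparr>\<^esub> order (G\<lparr>carrier := H\<rparr>) = \<one>\<^bsub>G\<lparr>carrier := H\<rparr>\<^esub>"
    using assms(2) by (intro H.pow_order_eq_1) simp
  then have "h [^] card H = \<one>" by (simp add: order_def nat_pow_consistent[symmetric])
  then show ?thesis using pow_eq_id subgroup.mem_carrier[OF assms] by blast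
qed

lemma nat_pow_eq_self_iff:
  assumes "x \<in> carrier G"
  shows "x [^] (a::nat) = x \<longleftrightarrow> int (ord x) dvd int a - 1"
proof -
  have "x [^] a = x \<longleftrightarrow> x [^] int a = x [^] (1::int)" using assms by (simp add: int_pow_int)
  also have "\<dots> \<longleftrightarrow> int (ord x) dvd 1 - int a" using int_pow_eq[OF assms] by blast
  finally show ?thesis by (simp add: dvd_diff_commute)
qed

lemma ord_mult_of_coprime:
  assumes comm: "x \<otimes> y = y \<otimes> x" and x: "x \<in> carrier G" and y: "y \<in> carrier G"
    and cop: "coprime (ord x) (ord y)"
  shows "ord (x \<otimes> y) = ord x * ord y"
proof -
  have dvd_exponent: "ord x * ord y dvd n" if "(x \<otimes> y) [^] n = \<one>" for n :: nat
  proof -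
    have "(x \<otimes> y) [^] (n * ord y) = \<one>" and "(x \<otimes> y) [^] (n * ord x) = \<one>"
      using that x y by (simp_all add: nat_pow_pow[symmetric])
    then have "x [^] (n * ord y) = \<one>" "y [^] (n * ord x) = \<one>"
      using x y by (simp_all add: pow_mult_distrib[OF comm] nat_pow_pow[symmetric] mult.commute[of n])
    then have "ord x dvd n * ord y" "ord y dvd n * ord x" using x y pow_eq_id by blast+
    then have "ord x dvd n" "ord y dvd n"
      using cop by (simp_all add: coprime_dvd_mult_left_iff coprime_commute[of "ord x"])
    then show ?thesis using cop by (rule divides_mult)
  qed
  then have "ord x * ord y dvd ord (x \<otimes> y)" using x y by simp
  then show ?thesis using ord_mul_divides[OF comm x y] by (rule dvd_antisym[rotated])
qed

lemma cyclic_subgroup_nat_pow_generator: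
  assumes "finite (carrier G)" "subgroup P G" "cyclic_group (G\<lparr>carrier := P\<rparr>)"
  obtains g where "g \<in> P" "ord g = card P" "\<And>u. u \<in> P \<Longrightarrow> \<exists>i::nat. u = g [^] i"
proof -
  interpret P: group "G\<lparr>carrier := P\<rparr>" using assms(2) by (rule subgroup_imp_group)
  obtain g where g: "g \<in> P" "P = range (\<lambda>n::int. g [^]\<^bsub>G\<lparr>carrier := P\<rparr>\<^esub> n)"
    using assms(3) P.cyclic_group by auto
  have gG: "g \<in> carrier G" using subgroup.mem_carrier[OF assms(2) g(1)] .
  have "P = {g [^] k | k::int. k \<in> UNIV}"
    using g(2) int_pow_consistent[OF assms(2) g(1)] by auto
  then have P_generate: "P = generate G {g}" using generate_pow[OF gG] by simp
  have "ord g \<noteq> 0" using ord_ge_1[OF assms(1) gG] by simp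
  then have P_nat_pow: "P = {g [^] k | k::nat. k \<in> UNIV}"
    using P_generate generate_pow_nat[OF gG] by simp
  show thesis
  proof (rule that)
    show "g \<in> P" by (rule g(1))
    show "ord g = card P" using P_generate generate_pow_card[OF gG] by simp
    show "\<exists>i::nat. u = g [^] i" if "u \<in> P" for u using that P_nat_pow by blast
  qed
qed

lemma conj_nat_pow_iterate:
  assumes x: "x \<in> carrier G" and conj: "\<And>u. u \<in> H \<Longrightarrow> x \<otimes> u \<otimes> inv x = u [^] (a::nat)"
    and u: "u \<in> H" "u \<in> carrier G"
  shows "x [^] (j::nat) \<otimes> u \<otimes> inv (x [^] j) = u [^] (a ^ j)"
proof (induction j)
  case (Suc j)
  have "x [^] Suc j \<otimes> u \<otimes> inv (x [^] Suc j) = x [^] j \<otimes> (x \<otimes> u \<otimes> inv x) \<otimes> inv (x [^] j)"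
    using x u by (simp add: inv_mult_group m_assoc)
  also have "\<dots> = (x [^] j \<otimes> u \<otimes> inv (x [^] j)) [^] a"
    using conj[OF u(1)] conj_nat_pow x u by simp
  finally show ?case using Suc u by (simp add: nat_pow_pow mult.commute)
qed (use u in simp)

lemma mult_nat_pow_power_action:
  assumes x: "x \<in> carrier G" and conj: "\<And>u. u \<in> H \<Longrightarrow> x \<otimes> u \<otimes> inv x = u [^] (a::nat)"
    and u: "u \<in> H" "u \<in> carrier G"
  shows "(u \<otimes> x) [^] (j::nat) = u [^] (\<Sum>i<j. a ^ i) \<otimes> x [^] j"
proof (induction j)
  case (Suc j)
  have "(u \<otimes> x) [^] Suc j = u [^] (\<Sum>i<j. a ^ i) \<otimes> (x [^] j \<otimes> u \<otimes> inv (x [^] j)) \<otimes> x [^] Suc j"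
    using Suc x u by (simp add: m_assoc)
  also have "\<dots> = u [^] (\<Sum>i<Suc j. a ^ i) \<otimes> x [^] Suc j"
    using conj_nat_pow_iterate[OF x conj u] u by (simp add: nat_pow_mult)
  finally show ?case .
qed simp

end

locale internal_semidirect_product = group G for G (structure) +
  fixes P F :: "'a set"
  assumes normal: "P \<lhd> G" and subgroup_F: "subgroup F G"
    and inter_eq_one: "P \<inter> F = {\<one>}" and set_mult_eq_carrier: "P <#> F = carrier G"
begin

lemma subgroup_P: "subgroup P G"
  using normal by (rule normal_imp_subgroup)

lemma P_carrier: "u \<in> P \<Longrightarrow> u \<in> carrier G"
  using subgroup_P by (rule subgroup.mem_carrier)

lemma F_carrier: "x \<in> F \<Longrightarrow> x \<in> carrier G"
  using subgroup_F by (rule subgroup.mem_carrier)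

lemma mult_nat_pow_in_coset:
  assumes u: "u \<in> P" and x: "x \<in> F"
  shows "\<exists>w\<in>P. (u \<otimes> x) [^] (n::nat) = w \<otimes> x [^] n"
proof (induction n)
  case 0
  have "(u \<otimes> x) [^] (0::nat) = \<one> \<otimes> x [^] (0::nat)" by simp
  then show ?case using subgroup.one_closed[OF subgroup_P] by blast
next
  case (Suc n)
  then obtain w where w: "w \<in> P" "(u \<otimes> x) [^] n = w \<otimes> x [^] n" by blast
  have xG: "x \<in> carrier G" using F_carrier[OF x] .
  have "x [^] n \<otimes> u \<otimes> inv (x [^] n) \<in> P"
    using normal.inv_op_closed2[OF normal nat_pow_closed[OF xG] u] .
  then have "w \<otimes> (x [^] n \<otimes> u \<otimes> inv (x [^] n)) \<in> P"
    using subgroup.m_closed[OF subgroup_P w(1)] by blast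
  moreover have "(u \<otimes> x) [^] Suc n = (w \<otimes> (x [^] n \<otimes> u \<otimes> inv (x [^] n))) \<otimes> x [^] Suc n"
    using w P_carrier[OF w(1)] P_carrier[OF u] xG by (simp add: m_assoc)
  ultimately show ?case by blast
qed

lemma mult_nat_pow_mem_iff:
  assumes u: "u \<in> P" and x: "x \<in> F"
  shows "(u \<otimes> x) [^] n \<in> P \<longleftrightarrow> ord x dvd n"
proof -
  obtain w where w: "w \<in> P" "(u \<otimes> x) [^] n = w \<otimes> x [^] n"
    using mult_nat_pow_in_coset[OF u x] by blast
  have xG: "x \<in> carrier G" using F_carrier[OF x] .
  have "(u \<otimes> x) [^] n \<in> P \<longleftrightarrow> x [^] n \<in> P"
  proof
    assume "(u \<otimes> x) [^] n \<in> P"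
    then have "inv w \<otimes> (u \<otimes> x) [^] n \<in> P"
      using subgroup.m_closed[OF subgroup_P subgroup.m_inv_closed[OF subgroup_P w(1)]] by blast
    then show "x [^] n \<in> P" using w P_carrier[OF w(1)] xG by simp
  next
    assume "x [^] n \<in> P"
    then show "(u \<otimes> x) [^] n \<in> P" using w subgroup.m_closed[OF subgroup_P w(1)] by simp
  qed
  also have "\<dots> \<longleftrightarrow> x [^] n = \<one>"
    using inter_eq_one subgroup_nat_pow_closed[OF subgroup_F x] subgroup.one_closed[OF subgroup_P]
    by auto
  also have "\<dots> \<longleftrightarrow> ord x dvd n" using pow_eq_id[OF xG] .
  finally show ?thesis .
qed

lemma ord_dvd_ord_mult:
  assumes u: "u \<in> P" and x: "x \<in> F"
  shows "ord x dvd ord (u \<otimes> x)"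
proof -
  have "(u \<otimes> x) [^] ord (u \<otimes> x) = \<one>" using P_carrier[OF u] F_carrier[OF x] by simp
  then show ?thesis using mult_nat_pow_mem_iff[OF u x] subgroup.one_closed[OF subgroup_P] by metis
qed

lemma bij_betw_mult: "bij_betw (\<lambda>(u, x). u \<otimes> x) (P \<times> F) (carrier G)"
proof (rule bij_betw_imageI)
  show "inj_on (\<lambda>(u, x). u \<otimes> x) (P \<times> F)"
  proof (rule inj_onI, clarify)
    fix u x u' x'
    assume u: "u \<in> P" "u' \<in> P" and x: "x \<in> F" "x' \<in> F" and eq: "u \<otimes> x = u' \<otimes> x'"
    then have "inv u' \<otimes> u = x' \<otimes> inv x"
      by (metis F_carrier P_carrier inv_solve_left' inv_solve_right m_assoc m_closed inv_closed)
    moreover have "inv u' \<otimes> u \<in> P" and "x' \<otimes> inv x \<in> F"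
      using u x subgroup_P subgroup_F by (auto intro: subgroup.m_closed subgroup.m_inv_closed)
    ultimately have "inv u' \<otimes> u = \<one>" "x' \<otimes> inv x = \<one>" using inter_eq_one by auto
    then show "u = u' \<and> x = x'"
      using P_carrier[OF u(1)] P_carrier[OF u(2)] F_carrier[OF x(1)] F_carrier[OF x(2)]
      by (metis inv_closed inv_inv inv_equality)
  qed
  show "(\<lambda>(u, x). u \<otimes> x) ` (P \<times> F) = carrier G"
    unfolding set_mult_eq_carrier[symmetric] set_mult_def by force
qed

lemma sum_carrier_eq_sum_mult: "(\<Sum>g\<in>carrier G. f g) = (\<Sum>x\<in>F. \<Sum>u\<in>P. f (u \<otimes> x))"
proof -
  have "(\<Sum>g\<in>carrier G. f g) = (\<Sum>(u, x)\<in>P \<times> F. f (u \<otimes> x))"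
    using sum.reindex_bij_betw[OF bij_betw_mult, of f] by (simp add: case_prod_beta)
  also have "\<dots> = (\<Sum>x\<in>F. \<Sum>u\<in>P. f (u \<otimes> x))"
    by (simp add: sum.cartesian_product[symmetric] sum.swap[of _ P])
  finally show ?thesis .
qed

end

locale cyclic_coprime_semidirect_product = internal_semidirect_product +
  fixes p k :: nat
  assumes finite_carrier: "finite (carrier G)" and prime_p: "Factorial_Ring.prime p"
    and cyclic_P: "cyclic_group (G\<lparr>carrier := P\<rparr>)" and card_P: "card P = p ^ k"
    and coprime_card_F: "coprime p (card F)"
begin

lemma ord_dvd_prime_power: "u \<in> P \<Longrightarrow> ord u dvd p ^ k"
  using ord_dvd_card_subgroup[OF subgroup_P] card_P by simp

lemma coprime_ord_F: "x \<in> F \<Longrightarrow> coprime p (ord x)"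
  using coprime_divisors[OF dvd_refl ord_dvd_card_subgroup[OF subgroup_F] coprime_card_F] by blast

lemma conj_eq_nat_pow:
  assumes x: "x \<in> carrier G"
  obtains a where "\<And>u. u \<in> P \<Longrightarrow> x \<otimes> u \<otimes> inv x = u [^] (a::nat)"
proof -
  obtain g where g: "g \<in> P" "ord g = card P" "\<And>u. u \<in> P \<Longrightarrow> \<exists>i::nat. u = g [^] i"
    using cyclic_subgroup_nat_pow_generator[OF finite_carrier subgroup_P cyclic_P] by blast
  obtain a :: nat where a: "x \<otimes> g \<otimes> inv x = g [^] a"
    using g normal.inv_op_closed2[OF normal x g(1)] by blast
  have "x \<otimes> u \<otimes> inv x = u [^] a" if "u \<in> P" for u
  proof -
    obtain i :: nat where i: "u = g [^] i" using g(3) \<open>u \<in> P\<close> by blast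
    have "x \<otimes> u \<otimes> inv x = (g [^] a) [^] i" using conj_nat_pow[OF x P_carrier[OF g(1)]] a i by simp
    then show ?thesis using g(1) by (simp add: i nat_pow_pow mult.commute P_carrier)
  qed
  then show thesis by (rule that)
qed

lemma action_cases:
  assumes x: "x \<in> F"
  obtains (central) "x \<in> centralizer_in G F P"
  | (fixed_point_free) "\<And>u. u \<in> P \<Longrightarrow> x \<otimes> u \<otimes> inv x = u \<Longrightarrow> u = \<one>"
      "\<And>u. u \<in> P \<Longrightarrow> (u \<otimes> x) [^] ord x = \<one>"
proof -
  obtain g where g: "g \<in> P" "ord g = card P" "\<And>u. u \<in> P \<Longrightarrow> \<exists>i::nat. u = g [^] i"
    using cyclic_subgroup_nat_pow_generator[OF finite_carrier subgroup_P cyclic_P] by blast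
  obtain a where conj: "\<And>u. u \<in> P \<Longrightarrow> x \<otimes> u \<otimes> inv x = u [^] (a::nat)"
    using conj_eq_nat_pow[OF F_carrier[OF x]] by blast
  have fixed_iff: "x \<otimes> u \<otimes> inv x = u \<longleftrightarrow> int (ord u) dvd int a - 1" if "u \<in> P" for u
    using conj[OF that] nat_pow_eq_self_iff[OF P_carrier[OF that]] by simp
  have "g [^] (a ^ ord x) = g"
    using conj_nat_pow_iterate[OF F_carrier[OF x] conj g(1) P_carrier[OF g(1)], of "ord x"]
      F_carrier[OF x] P_carrier[OF g(1)] by simp
  then have "int p ^ k dvd int a ^ ord x - 1"
    using nat_pow_eq_self_iff[OF P_carrier[OF g(1)]] g(2) card_P by simp
  with prime_power_dvd_pow_sub_one_cases[OF prime_p coprime_ord_F[OF x]]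
  consider "int p ^ k dvd int a - 1" | "\<not> int p dvd int a - 1" "int p ^ k dvd (\<Sum>i\<in>{..<ord x}. int a ^ i)"
    by blast
  then show thesis
  proof cases
    case 1
    have "x \<otimes> u = u \<otimes> x" if u: "u \<in> P" for u
    proof -
      have "int (ord u) dvd int p ^ k" using ord_dvd_prime_power[OF u] by (simp flip: of_nat_power)
      then have "x \<otimes> u \<otimes> inv x = u" using fixed_iff[OF u] dvd_trans[OF _ 1] by blast
      then show ?thesis using x u by (simp add: inv_solve_right' F_carrier P_carrier)
    qed
    then show thesis using central x by (simp add: centralizer_in_def)
  next
    case 2
    have "coprime (int p ^ k) (int a - 1)"
      using 2(1) prime_p prime_imp_coprime[of "int p"] by simp
    have "u = \<one>" if u: "u \<in> P" and fixed: "x \<otimes> u \<otimes> inv x = u" for u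
    proof -
      have "int (ord u) dvd int p ^ k" using ord_dvd_prime_power[OF u] by (simp flip: of_nat_power)
      with \<open>coprime (int p ^ k) (int a - 1)\<close> have "is_unit (int (ord u))"
        using fixed_iff[OF u] fixed by (meson coprime_common_divisor)
      then show ?thesis using ord_eq_1 P_carrier[OF u] by simp
    qed
    moreover have "(u \<otimes> x) [^] ord x = \<one>" if "u \<in> P" for u
    proof -
      have "int (p ^ k) dvd int (\<Sum>i\<in>{..<ord x}. a ^ i)" using 2(2) by simp
      then have "p ^ k dvd (\<Sum>i\<in>{..<ord x}. a ^ i)" by (simp only: of_nat_dvd_iff)
      then have "u [^] (\<Sum>i\<in>{..<ord x}. a ^ i) = \<one>"
        using pow_eq_id[OF P_carrier[OF that]] dvd_trans[OF ord_dvd_prime_power[OF that]] by blast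
      then show ?thesis
        using mult_nat_pow_power_action[OF F_carrier[OF x] conj that P_carrier[OF that], of "ord x"]
          F_carrier[OF x] by simp
    qed
    ultimately show thesis by (rule fixed_point_free)
  qed
qed

lemma finite_F: "finite F"
  using finite_subset[OF subgroup.subset[OF subgroup_F] finite_carrier] .

lemma centralizer_subset: "centralizer_in G F P \<subseteq> F"
  by (auto simp: centralizer_in_def)

lemma one_in_centralizer: "\<one> \<in> centralizer_in G F P"
  using subgroup.one_closed[OF subgroup_F] P_carrier by (simp add: centralizer_in_def)

lemma conj_trivial_or_fixed_point_free:
  assumes x: "x \<in> F"
  shows "(\<forall>u\<in>P. x \<otimes> u \<otimes> inv x = u) \<or> (\<forall>u\<in>P. x \<otimes> u \<otimes> inv x = u \<longrightarrow> u = \<one>)"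
  using x
proof (cases rule: action_cases)
  case central
  then have "x \<otimes> u \<otimes> inv x = u" if "u \<in> P" for u
    using that P_carrier[OF that] F_carrier[OF x] by (simp add: centralizer_in_def inv_solve_right')
  then show ?thesis by blast
qed blast

lemma ord_mult_centralizer:
  assumes u: "u \<in> P" and x: "x \<in> centralizer_in G F P"
  shows "ord (u \<otimes> x) = ord u * ord x"
proof -
  have xF: "x \<in> F" using x centralizer_subset by blast
  have "coprime (p ^ k) (ord x)" using coprime_ord_F[OF xF] by simp
  then have "coprime (ord u) (ord x)" using coprime_divisors[OF ord_dvd_prime_power[OF u] dvd_refl] by blast
  moreover have "u \<otimes> x = x \<otimes> u" using u x by (simp add: centralizer_in_def)
  ultimately show ?thesis using ord_mult_of_coprime P_carrier[OF u] F_carrier[OF xF] by simp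
qed

lemma ord_mult_not_centralizer:
  assumes u: "u \<in> P" and x: "x \<in> F - centralizer_in G F P"
  shows "ord (u \<otimes> x) = ord x"
proof -
  from x have xF: "x \<in> F" by simp
  then show ?thesis
  proof (cases rule: action_cases)
    case fixed_point_free
    then have "ord (u \<otimes> x) dvd ord x"
      using u P_carrier[OF u] F_carrier[OF xF] by (simp add: pow_eq_id[symmetric])
    then show ?thesis using ord_dvd_ord_mult[OF u xF] by (rule dvd_antisym)
  qed (use x in blast)
qed

lemma psi_carrier_eq:
  defines "Z \<equiv> centralizer_in G F P"
  shows "psi G (carrier G) = psi G P * psi G Z + card P * psi G (F - Z)"
proof -
  have "psi G (carrier G) = (\<Sum>x\<in>F - Z. \<Sum>u\<in>P. ord (u \<otimes> x)) + (\<Sum>x\<in>Z. \<Sum>u\<in>P. ord (u \<otimes> x))"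
    unfolding psi_def sum_carrier_eq_sum_mult Z_def using centralizer_subset finite_F
    by (rule sum.subset_diff)
  also have "\<dots> = (\<Sum>x\<in>F - Z. \<Sum>u\<in>P. ord x) + (\<Sum>x\<in>Z. \<Sum>u\<in>P. ord u * ord x)"
    unfolding Z_def by (simp add: ord_mult_centralizer ord_mult_not_centralizer)
  finally show ?thesis by (simp add: psi_def sum_distrib_left sum_distrib_right mult.commute)
qed

lemma psi_diff_centralizer_less: "psi G (F - centralizer_in G F P) < psi G F"
proof -
  let ?Z = "centralizer_in G F P"
  have "ord \<one> \<le> psi G ?Z"
    unfolding psi_def
    by (rule member_le_sum[OF one_in_centralizer _ finite_subset[OF centralizer_subset finite_F]]) simp
  moreover have "psi G F = psi G (F - ?Z) + psi G ?Z"
    unfolding psi_def using centralizer_subset finite_F by (rule sum.subset_diff)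
  ultimately show ?thesis by simp
qed

end

theorem lemma2p2:
  fixes G (structure) and P F :: "'a set" and p :: nat
  assumes "group G" and "finite (carrier G)"
    and "Factorial_Ring.prime p"
    and "P \<lhd> G" and "cyclic_group (G\<lparr>carrier := P\<rparr>)" and "\<exists>k. card P = p ^ k"
    and "subgroup F G" and "card F > 1" and "coprime p (card F)"
    and "P \<inter> F = {\<one>}" and "P <#> F = carrier G"
  shows
    "(\<forall>x\<in>F. (\<forall>u\<in>P. x \<otimes> u \<otimes> inv x = u) \<or> (\<forall>u\<in>P. x \<otimes> u \<otimes> inv x = u \<longrightarrow> u = \<one>))
     \<and> (\<forall>x\<in>F. \<forall>u\<in>P. 0 < group.ord G x \<and> (u \<otimes> x) [^] group.ord G x \<in> P
           \<and> (\<forall>k::nat. 0 < k \<and> (u \<otimes> x) [^] k \<in> P \<longrightarrow> group.ord G x \<le> k))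
     \<and> (\<forall>u\<in>P. \<forall>x\<in>centralizer_in G F P. group.ord G (u \<otimes> x) = group.ord G u * group.ord G x)
     \<and> (\<forall>u\<in>P. \<forall>x\<in>F - centralizer_in G F P. group.ord G (u \<otimes> x) = group.ord G x)
     \<and> psi G (carrier G) = psi G P * psi G (centralizer_in G F P) + card P * psi G (F - centralizer_in G F P)
     \<and> psi G P * psi G (centralizer_in G F P) + card P * psi G (F - centralizer_in G F P)
         < psi G P * psi G (centralizer_in G F P) + card P * psi G F"
proof -
  obtain k where k: "card P = p ^ k" using assms(6) by blast
  interpret cyclic_coprime_semidirect_product G P F p k
    unfolding cyclic_coprime_semidirect_product_def cyclic_coprime_semidirect_product_axioms_def
      internal_semidirect_product_def internal_semidirect_product_axioms_def
    using assms k by simp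
  have ord_pos: "0 < ord x" if "x \<in> F" for x
    using ord_ge_1[OF finite_carrier F_carrier[OF that]] by simp
  have "\<forall>x\<in>F. \<forall>u\<in>P. 0 < ord x \<and> (u \<otimes> x) [^] ord x \<in> P
           \<and> (\<forall>k::nat. 0 < k \<and> (u \<otimes> x) [^] k \<in> P \<longrightarrow> ord x \<le> k)"
    using mult_nat_pow_mem_iff ord_pos by (auto intro: dvd_imp_le)
  moreover have "0 < card P" using k prime_p by (simp add: prime_gt_0_nat)
  ultimately show ?thesis
    using conj_trivial_or_fixed_point_free ord_mult_centralizer ord_mult_not_centralizer
      psi_carrier_eq psi_diff_centralizer_less by simp
qed

end
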